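(* Let $W=\mathrm{des}(\pi)$ and $W^\ast=\mathrm{des}(\pi^\ast)$, where $\pi^\ast$ is constructed from $\pi$ as described in the context. Then $W^\ast$ has the $W$-size biased distribution.
   Context: Let $h\ge 2$, let $n_1,\dots,n_h$ be positive integers, $n=n_1+\dots+n_h\ge 4$, and let $\pi$ be a uniformly distributed permutation of the multiset $\{1^{n_1},\dots,h^{n_h}\}$ (a sequence $(\pi(1),\dots,\pi(n))$ in which each $a$ occurs $n_a$ times, all such sequences equally likely). $\mathrm{des}(\pi)$ is the number of $i\in\{1,\dots,n-1\}$ with $\pi(i)>\pi(i+1)$. For a nonnegative integrable random variable $W$ with $\mathbb{E}W>0$, a random variable $W^\ast$ has the $W$-size biased distribution if $\mathbb{E}(Wf(W))=\mathbb{E}W\,\mathbb{E}f(W^\ast)$ for all continuous $f$ for which the left side exists. Construction of $\pi^\ast$: Let $I$ be uniformly distributed over $\{(1,2),(2,3),\dots,(n-1,n)\}$; let $J=(a,b)$, for $h\ge a>b\ge 1$, with probability $n_an_b/\sum_{c<d}n_cn_d$; $\pi,I,J$ are independent. Write $I=(i,j)$ with $j=i+1$. If $\pi(i)>\pi(j)$, set $\pi^\ast=\pi$. If $\pi(i)\le\pi(j)$ and $J=(a,b)$: choose $i^\ast$ uniformly from $\{k:\pi(k)=a\}$ and $j^\ast$ uniformly from $\{k:\pi(k)=b\}$, independently of each other and of all else. Then: (1) if $\{i,j\}\cap\{i^\ast,j^\ast\}=\emptyset$, or $i=i^\ast,j\ne j^\ast$, or $i\ne i^\ast,j=j^\ast$,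 obtain $\pi^\ast$ from $\pi$ by exchanging the entries at positions $i$ and $i^\ast$ and exchanging the entries at positions $j$ and $j^\ast$; (2) if $i=j^\ast$ and $j=i^\ast$, exchange the entries at positions $i$ and $j$; (3) if $i=j^\ast$, $j\ne i^\ast$, set $\pi^\ast(i)=\pi(i^\ast)$, $\pi^\ast(j)=\pi(i)$, $\pi^\ast(i^\ast)=\pi(j)$, and $\pi^\ast(k)=\pi(k)$ for $k\notin\{i,j,i^\ast\}$; (4) if $i\ne j^\ast$, $j=i^\ast$, set $\pi^\ast(i)=\pi(j)$, $\pi^\ast(j)=\pi(j^\ast)$, $\pi^\ast(j^\ast)=\pi(i)$, and $\pi^\ast(k)=\pi(k)$ for $k\notin\{i,j,j^\ast\}$. *)

theory Defs
  imports "HOL-Probability.Probability"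
begin

text \<open>Sequences are lists; positions are 0-indexed (position k of the list is position k+1 of the paper).\<close>

definition mperms :: "nat \<Rightarrow> (nat \<Rightarrow> nat) \<Rightarrow> nat list set" where
  "mperms h ns = {xs. set xs \<subseteq> {1..h} \<and> (\<forall>a\<in>{1..h}. count (mset xs) a = ns a)}"

definition des :: "nat list \<Rightarrow> nat" where
  "des xs = card {i. Suc i < length xs \<and> xs ! i > xs ! Suc i}"

definition swap :: "nat list \<Rightarrow> nat \<Rightarrow> nat \<Rightarrow> nat list" where
  "swap xs k l = xs[k := xs ! l, l := xs ! k]"

text \<open>Modification of xs given I = (i, i+1) and the chosen positions i' (value a), j' (value b).\<close>
definition modify :: "nat list \<Rightarrow> nat \<Rightarrow> nat \<Rightarrow> nat \<Rightarrow> nat list" where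
  "modify xs i i' j' =
    (let j = Suc i in
     if i = j' \<and> j = i' then swap xs i j
     else if i = j' \<and> j \<noteq> i' then xs[i := xs ! i', j := xs ! i, i' := xs ! j]
     else if i \<noteq> j' \<and> j = i' then xs[i := xs ! j, j := xs ! j', j' := xs ! i]
     else swap (swap xs i i') j j')"

definition J_pmf :: "nat \<Rightarrow> (nat \<Rightarrow> nat) \<Rightarrow> (nat \<times> nat) pmf" where
  "J_pmf h ns = pmf_of_multiset
     (\<Sum>a\<in>{1..h}. \<Sum>b\<in>{1..<a}. replicate_mset (ns a * ns b) (a, b))"

definition pi_pmf :: "nat \<Rightarrow> (nat \<Rightarrow> nat) \<Rightarrow> nat list pmf" where
  "pi_pmf h ns = pmf_of_set (mperms h ns)"

definition pistar_pmf :: "nat \<Rightarrow> (nat \<Rightarrow> nat) \<Rightarrow> nat list pmf" where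
  "pistar_pmf h ns = do {
     p \<leftarrow> pi_pmf h ns;
     i \<leftarrow> pmf_of_set {0..<length p - 1};
     J \<leftarrow> J_pmf h ns;
     if p ! i > p ! Suc i then return_pmf p
     else do {
       i' \<leftarrow> pmf_of_set {k. k < length p \<and> p ! k = fst J};
       j' \<leftarrow> pmf_of_set {k. k < length p \<and> p ! k = snd J};
       return_pmf (modify p i i' j')
     }
   }"

definition size_biased :: "real pmf \<Rightarrow> real pmf \<Rightarrow> bool" where
  "size_biased X Y \<longleftrightarrow>
     (AE x in measure_pmf X. 0 \<le> x) \<and> integrable (measure_pmf X) (\<lambda>x. x) \<and>
     measure_pmf.expectation X (\<lambda>x. x) > 0 \<and>
     (\<forall>f :: real \<Rightarrow> real. continuous_on UNIV f \<longrightarrow>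
        integrable (measure_pmf X) (\<lambda>x. x * f x) \<longrightarrow>
        measure_pmf.expectation X (\<lambda>x. x * f x) =
        measure_pmf.expectation X (\<lambda>x. x) * measure_pmf.expectation Y f)"

end

theory Submission
  imports Defs "HOL-Combinatorics.Multiset_Permutations"
begin

(*
  Average first over pi and I. A pair (pi, i) with a descent at i contributes pi itself. Otherwise, after
  cancelling the weight n_a n_b of J = (a, b) against the uniform choices of i' and j', the pair contributes
  1/T times the sum over all i', j' of the modified sequences, where T = sum_{c<d} n_c n_d is also the number
  of pairs of positions (k, l) with q(k) > q(l), for every permutation q of the multiset.

  For fixed i and a > b, recording the positions k, l to which the entries pi(i), pi(i+1) are moved turns
  the modification into a bijection from the triples (pi, i', j') with pi(i) <= pi(i+1), pi(i') = a,
  pi(j') = b onto the triples (q, k, l) with q(i) = a, q(i+1) = b, k <> l and q(k) <= q(l). There are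
  n(n-1) - T such pairs (k, l) for each q, so every descent of q at i carries total weight
  1 + (n(n-1) - T)/T = n(n-1)/T, and E g(pistar) = n/(T |P|) * sum_q des(q) g(q): pistar is distributed as the
  des-size-biased version of the uniform pi.
*)

section \<open>The modification as a bijection\<close>

lemma length_swap [simp]: "length (swap xs k l) = length xs"
  by (simp add: swap_def)

lemma nth_swap:
  "k < length xs \<Longrightarrow> l < length xs \<Longrightarrow> m < length xs \<Longrightarrow>
   swap xs k l ! m = (if m = l then xs ! k else if m = k then xs ! l else xs ! m)"
  by (simp add: swap_def nth_list_update)

lemma mset_swap_eq [simp]: "k < length xs \<Longrightarrow> l < length xs \<Longrightarrow> mset (swap xs k l) = mset xs"
  unfolding swap_def by (metis mset_swap list_update_swap)

lemma modify_disjoint: "Suc i \<noteq> i' \<Longrightarrow> i \<noteq> j' \<Longrightarrow> modify xs i i' j' = swap (swap xs i i') (Suc i) j'"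
  unfolding modify_def Let_def by simp

lemma modify_adjacent: "modify xs i (Suc i) i = swap xs i (Suc i)"
  unfolding modify_def Let_def by simp

lemma modify_left:
  "Suc i < length xs \<Longrightarrow> i' < length xs \<Longrightarrow> i' \<noteq> i \<Longrightarrow> i' \<noteq> Suc i \<Longrightarrow>
   modify xs i i' i = swap (swap xs i (Suc i)) i i'"
  unfolding modify_def Let_def by (intro nth_equalityI) (auto simp: nth_swap nth_list_update)

lemma modify_right:
  "Suc i < length xs \<Longrightarrow> j' < length xs \<Longrightarrow> j' \<noteq> i \<Longrightarrow> j' \<noteq> Suc i \<Longrightarrow>
   modify xs i (Suc i) j' = swap (swap xs i (Suc i)) (Suc i) j'"
  unfolding modify_def Let_def by (intro nth_equalityI) (auto simp: nth_swap nth_list_update)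

text \<open>The second component records the positions to which the entries at \<open>i\<close> and \<open>i + 1\<close> are moved.\<close>
definition modify_tracked :: "nat \<Rightarrow> nat list \<times> nat \<times> nat \<Rightarrow> nat list \<times> nat \<times> nat" where
  "modify_tracked i = (\<lambda>(p, i', j'). (modify p i i' j',
     if i = j' \<and> Suc i = i' then (Suc i, i) else if i = j' then (Suc i, i')
     else if Suc i = i' then (j', i) else (i', j')))"

definition unmodify :: "nat \<Rightarrow> nat list \<times> nat \<times> nat \<Rightarrow> nat list \<times> nat \<times> nat" where
  "unmodify i = (\<lambda>(q, k, l).
     if k = Suc i \<and> l = i then (swap q i (Suc i), Suc i, i)
     else if k = Suc i then (swap (swap q i (Suc i)) (Suc i) l, l, i)
     else if l = i then (swap (swap q i (Suc i)) i k, Suc i, k)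
     else (swap (swap q i k) (Suc i) l, k, l))"

lemma modify_tracked_invertible:
  assumes "Suc i < length p" "p ! i \<le> p ! Suc i" "i' < length p" "p ! i' = a" "j' < length p" "p ! j' = b" "b < a"
    and "modify_tracked i (p, i', j') = (q, k, l)"
  shows "mset q = mset p \<and> q ! i = a \<and> q ! Suc i = b \<and> k < length p \<and> l < length p \<and> k \<noteq> l \<and> q ! k \<le> q ! l
    \<and> unmodify i (q, k, l) = (p, i', j')"
proof -
  have "i' \<noteq> j'" using assms by auto
  then consider "i = j'" "Suc i = i'" | "i = j'" "Suc i \<noteq> i'" | "i \<noteq> j'" "Suc i = i'" | "i \<noteq> j'" "Suc i \<noteq> i'"
    by blast
  then show ?thesis
    using assms unfolding modify_tracked_def unmodify_def
    by cases (auto simp: modify_adjacent modify_left modify_right modify_disjoint nth_swap intro!: nth_equalityI)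
qed

lemma unmodify_invertible:
  assumes "Suc i < length q" "q ! i = a" "q ! Suc i = b" "k < length q" "l < length q" "k \<noteq> l" "q ! k \<le> q ! l" "b < a"
    and "unmodify i (q, k, l) = (p, i', j')"
  shows "mset p = mset q \<and> p ! i \<le> p ! Suc i \<and> i' < length q \<and> p ! i' = a \<and> j' < length q \<and> p ! j' = b
    \<and> modify_tracked i (p, i', j') = (q, k, l)"
proof -
  have "\<not> (k = i \<and> l = Suc i)" using assms by auto
  then consider "k = Suc i" "l = i" | "k = Suc i" "l \<noteq> i" | "k \<noteq> Suc i" "l = i" | "k \<noteq> Suc i" "l \<noteq> i"
    by blast
  then show ?thesis
    using assms unfolding modify_tracked_def unmodify_def
    by cases (auto simp: modify_adjacent modify_left modify_right modify_disjoint nth_swap intro!: nth_equalityI)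
qed

lemma bij_betw_modify_tracked:
  assumes "Suc i < size M" "b < a"
  shows "bij_betw (modify_tracked i)
    {(p, i', j'). mset p = M \<and> p ! i \<le> p ! Suc i \<and> i' < size M \<and> p ! i' = a \<and> j' < size M \<and> p ! j' = b}
    {(q, k, l). mset q = M \<and> q ! i = a \<and> q ! Suc i = b \<and> k < size M \<and> l < size M \<and> k \<noteq> l \<and> q ! k \<le> q ! l}"
    (is "bij_betw _ ?D ?C")
proof (rule bij_betw_byWitness[where f' = "unmodify i"])
  have forward: "modify_tracked i x \<in> ?C \<and> unmodify i (modify_tracked i x) = x" if "x \<in> ?D" for x
  proof -
    obtain p i' j' where x: "x = (p, i', j')" by (cases x)
    obtain q k l where eq: "modify_tracked i (p, i', j') = (q, k, l)" by (cases "modify_tracked i (p, i', j')")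
    show ?thesis
      using that modify_tracked_invertible[OF _ _ _ _ _ _ assms(2) eq] assms(1) unfolding x eq
      by (auto dest: mset_eq_length)
  qed
  have backward: "unmodify i y \<in> ?D \<and> modify_tracked i (unmodify i y) = y" if "y \<in> ?C" for y
  proof -
    obtain q k l where y: "y = (q, k, l)" by (cases y)
    obtain p i' j' where eq: "unmodify i (q, k, l) = (p, i', j')" by (cases "unmodify i (q, k, l)")
    show ?thesis
      using that unmodify_invertible[OF _ _ _ _ _ _ _ assms(2) eq] assms(1) unfolding y eq
      by (auto dest: mset_eq_length)
  qed
  show "\<forall>x\<in>?D. unmodify i (modify_tracked i x) = x"
    by (intro ballI) (rule forward[THEN conjunct2])
  show "modify_tracked i ` ?D \<subseteq> ?C"
    by (intro image_subsetI) (rule forward[THEN conjunct1])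
  show "\<forall>y\<in>?C. modify_tracked i (unmodify i y) = y"
    by (intro ballI) (rule backward[THEN conjunct2])
  show "unmodify i ` ?C \<subseteq> ?D"
    by (intro image_subsetI) (rule backward[THEN conjunct1])
qed

abbreviation positions :: "'a list \<Rightarrow> 'a \<Rightarrow> nat set" where
  "positions xs a \<equiv> {k. k < length xs \<and> xs ! k = a}"

definition le_pairs :: "'a::linorder list \<Rightarrow> (nat \<times> nat) set" where
  "le_pairs xs = {(k, l). k < length xs \<and> l < length xs \<and> k \<noteq> l \<and> xs ! k \<le> xs ! l}"

lemma finite_le_pairs [simp]: "finite (le_pairs xs)"
  unfolding le_pairs_def by (rule finite_subset[of _ "{..<length xs} \<times> {..<length xs}"]) auto

lemma finite_lists_with_mset [simp]: "finite {xs. mset xs = M}"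
  by (rule finite_subset[OF _ finite_permutations_of_multiset[of M]])
     (auto simp: permutations_of_multiset_def)

lemma sum_modify_eq_sum_le_pairs:
  fixes G :: "nat list \<Rightarrow> real"
  assumes "Suc i < size M" "b < a"
  shows "(\<Sum>p | mset p = M \<and> p ! i \<le> p ! Suc i. \<Sum>i'\<in>positions p a. \<Sum>j'\<in>positions p b. G (modify p i i' j'))
       = (\<Sum>q | mset q = M \<and> q ! i = a \<and> q ! Suc i = b. card (le_pairs q) * G q)"
proof -
  have D: "(SIGMA p:{p. mset p = M \<and> p ! i \<le> p ! Suc i}. positions p a \<times> positions p b)
      = {(p, i', j'). mset p = M \<and> p ! i \<le> p ! Suc i \<and> i' < size M \<and> p ! i' = a \<and> j' < size M \<and> p ! j' = b}"
    by (auto dest: mset_eq_length)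
  have "(\<Sum>p | mset p = M \<and> p ! i \<le> p ! Suc i. \<Sum>i'\<in>positions p a. \<Sum>j'\<in>positions p b. G (modify p i i' j'))
      = (\<Sum>p | mset p = M \<and> p ! i \<le> p ! Suc i. \<Sum>(i', j')\<in>positions p a \<times> positions p b. G (modify p i i' j'))"
    by (simp add: sum.cartesian_product)
  also have "\<dots> = (\<Sum>(p, i', j') | mset p = M \<and> p ! i \<le> p ! Suc i \<and> i' < size M \<and> p ! i' = a \<and> j' < size M \<and> p ! j' = b.
           G (fst (modify_tracked i (p, i', j'))))"
    unfolding D[symmetric] by (subst sum.Sigma) (auto simp: modify_tracked_def split_def)
  also have "\<dots> = (\<Sum>(q, k, l) | mset q = M \<and> q ! i = a \<and> q ! Suc i = b \<and> k < size M \<and> l < size M \<and> k \<noteq> l \<and> q ! k \<le> q ! l. G q)"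
    using sum.reindex_bij_betw[OF bij_betw_modify_tracked[OF assms], of "\<lambda>(q, k, l). G q"]
    by (simp add: split_def)
  also have "\<dots> = (\<Sum>(q, k, l)\<in>(SIGMA q:{q. mset q = M \<and> q ! i = a \<and> q ! Suc i = b}. le_pairs q). G q)"
    by (rule sum.cong) (auto simp: le_pairs_def dest: mset_eq_length)
  also have "\<dots> = (\<Sum>q | mset q = M \<and> q ! i = a \<and> q ! Suc i = b. card (le_pairs q) * G q)"
    by (subst sum.Sigma[symmetric]) (auto simp: split_def)
  finally show ?thesis .
qed

section \<open>Counting pairs of positions\<close>

definition letter_mset :: "nat \<Rightarrow> (nat \<Rightarrow> nat) \<Rightarrow> nat multiset" where
  "letter_mset h ns = (\<Sum>a\<in>{1..h}. replicate_mset (ns a) a)"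

definition pair_weight :: "nat \<Rightarrow> (nat \<Rightarrow> nat) \<Rightarrow> nat" where
  "pair_weight h ns = (\<Sum>a\<in>{1..h}. \<Sum>b\<in>{1..<a}. ns a * ns b)"

lemma card_positions: "card (positions xs a) = count (mset xs) a"
  by (simp add: count_mset count_list_eq_length_filter length_filter_conv_card eq_commute)

lemma count_letter_mset: "count (letter_mset h ns) a = (if a \<in> {1..h} then ns a else 0)"
  by (simp add: letter_mset_def count_sum sum.delta')

lemma size_letter_mset: "size (letter_mset h ns) = (\<Sum>a\<in>{1..h}. ns a)"
  by (simp add: letter_mset_def)

lemma set_letter_mset: "set_mset (letter_mset h ns) \<subseteq> {1..h}"
  by (auto simp: count_letter_mset simp flip: count_greater_zero_iff split: if_splits)

lemma mperms_eq_permutations_of_multiset: "mperms h ns = permutations_of_multiset (letter_mset h ns)"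
proof -
  have "set xs \<subseteq> {1..h} \<and> (\<forall>a\<in>{1..h}. count (mset xs) a = ns a) \<longleftrightarrow> mset xs = letter_mset h ns" for xs
  proof
    assume "set xs \<subseteq> {1..h} \<and> (\<forall>a\<in>{1..h}. count (mset xs) a = ns a)"
    then show "mset xs = letter_mset h ns"
      by (intro multiset_eqI) (auto simp: count_letter_mset count_eq_zero_iff)
  next
    assume "mset xs = letter_mset h ns"
    then show "set xs \<subseteq> {1..h} \<and> (\<forall>a\<in>{1..h}. count (mset xs) a = ns a)"
      using set_letter_mset by (metis count_letter_mset set_mset_mset)
  qed
  then show ?thesis by (simp add: mperms_def permutations_of_multiset_def)
qed

lemma card_gt_pairs:
  assumes "mset q = letter_mset h ns"
  shows "card {(k, l). k < length q \<and> l < length q \<and> q ! l < q ! k} = pair_weight h ns"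
proof -
  let ?J = "SIGMA a:{1..h}. {1..<a}"
  have "set q \<subseteq> {1..h}" using assms set_letter_mset by (metis set_mset_mset)
  then have "{(k, l). k < length q \<and> l < length q \<and> q ! l < q ! k}
      = (\<Union>(a, b)\<in>?J. positions q a \<times> positions q b)"
    by (fastforce dest: nth_mem)
  then have "card {(k, l). k < length q \<and> l < length q \<and> q ! l < q ! k}
      = (\<Sum>(a, b)\<in>?J. card (positions q a \<times> positions q b))"
    by (simp add: split_def, subst card_UN_disjoint) auto
  also have "\<dots> = (\<Sum>(a, b)\<in>?J. ns a * ns b)"
    using assms by (intro sum.cong) (auto simp: card_cartesian_product card_positions count_letter_mset)
  also have "\<dots> = pair_weight h ns"
    by (simp add: pair_weight_def sum.Sigma)
  finally show ?thesis .
qed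

lemma card_off_diagonal: "card {(k, l). k < n \<and> l < n \<and> k \<noteq> l} = n * (n - 1)"
proof -
  have "{(k, l). k < n \<and> l < n \<and> k \<noteq> l} = (SIGMA k:{..<n}. {..<n} - {k})"
    by auto
  then show ?thesis by (simp add: card_SigmaI)
qed

lemma card_le_pairs:
  assumes "mset q = letter_mset h ns"
  shows "card (le_pairs q) + pair_weight h ns = length q * (length q - 1)"
proof -
  let ?gt = "{(k, l). k < length q \<and> l < length q \<and> q ! l < q ! k}"
  have "le_pairs q \<union> ?gt = {(k, l). k < length q \<and> l < length q \<and> k \<noteq> l}"
    unfolding le_pairs_def by auto
  moreover have "card (le_pairs q \<union> ?gt) = card (le_pairs q) + card ?gt"
  proof (rule card_Un_disjoint)
    show "finite ?gt"
      by (rule finite_subset[of _ "{..<length q} \<times> {..<length q}"]) auto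
    show "le_pairs q \<inter> ?gt = {}"
      unfolding le_pairs_def by auto
  qed simp
  ultimately show ?thesis
    using card_gt_pairs[OF assms] card_off_diagonal[of "length q"] by simp
qed

lemma sum_descents_partition:
  fixes G :: "nat list \<Rightarrow> real"
  assumes "Suc i < size (letter_mset h ns)"
  shows "(\<Sum>a\<in>{1..h}. \<Sum>b\<in>{1..<a}. \<Sum>q | mset q = letter_mset h ns \<and> q ! i = a \<and> q ! Suc i = b. G q)
       = (\<Sum>q | mset q = letter_mset h ns \<and> q ! Suc i < q ! i. G q)"
proof -
  let ?J = "SIGMA a:{1..h}. {1..<a}"
  let ?S = "\<lambda>(a, b). {q. mset q = letter_mset h ns \<and> q ! i = a \<and> q ! Suc i = b}"
  have "{q. mset q = letter_mset h ns \<and> q ! Suc i < q ! i} = (\<Union>ab\<in>?J. ?S ab)"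
  proof (intro set_eqI iffI)
    fix q assume q: "q \<in> {q. mset q = letter_mset h ns \<and> q ! Suc i < q ! i}"
    then have mq: "mset q = letter_mset h ns" and desc: "q ! Suc i < q ! i" by auto
    have "Suc i < length q" using assms mq by (metis size_mset)
    moreover have "set q \<subseteq> {1..h}" using mq set_letter_mset by (metis set_mset_mset)
    ultimately have "q ! i \<in> {1..h}" "q ! Suc i \<in> {1..h}"
      by (meson Suc_lessD nth_mem subsetD)+
    with desc have "(q ! i, q ! Suc i) \<in> ?J" by auto
    moreover have "q \<in> ?S (q ! i, q ! Suc i)" using q by simp
    ultimately show "q \<in> (\<Union>ab\<in>?J. ?S ab)" by (rule UN_I)
  next
    fix q assume "q \<in> (\<Union>ab\<in>?J. ?S ab)"
    then show "q \<in> {q. mset q = letter_mset h ns \<and> q ! Suc i < q ! i}" by auto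
  qed
  then have "(\<Sum>q | mset q = letter_mset h ns \<and> q ! Suc i < q ! i. G q) = (\<Sum>q\<in>(\<Union>ab\<in>?J. ?S ab). G q)"
    by (simp only:)
  also have "\<dots> = (\<Sum>ab\<in>?J. \<Sum>q\<in>?S ab. G q)"
  proof (rule sum.UNION_disjoint)
    show "finite ?J" by (simp add: finite_SigmaI)
    show "\<forall>ab\<in>?J. finite (?S ab)" by (simp add: split_def)
    show "\<forall>A\<in>?J. \<forall>B\<in>?J. A \<noteq> B \<longrightarrow> ?S A \<inter> ?S B = {}" by auto
  qed
  also have "\<dots> = (\<Sum>a\<in>{1..h}. \<Sum>b\<in>{1..<a}. \<Sum>q | mset q = letter_mset h ns \<and> q ! i = a \<and> q ! Suc i = b. G q)"
    by (subst sum.Sigma) (auto simp: split_def)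
  finally show ?thesis ..
qed

definition modify_sum :: "nat \<Rightarrow> (nat \<Rightarrow> nat) \<Rightarrow> (nat list \<Rightarrow> real) \<Rightarrow> nat list \<Rightarrow> nat \<Rightarrow> real" where
  "modify_sum h ns G p i =
     (\<Sum>a\<in>{1..h}. \<Sum>b\<in>{1..<a}. \<Sum>i'\<in>positions p a. \<Sum>j'\<in>positions p b. G (modify p i i' j'))"

lemma sum_modify_sum:
  assumes "Suc i < size (letter_mset h ns)"
  shows "(\<Sum>p | mset p = letter_mset h ns \<and> p ! i \<le> p ! Suc i. modify_sum h ns G p i)
       = (real (size (letter_mset h ns) * (size (letter_mset h ns) - 1)) - real (pair_weight h ns))
         * (\<Sum>q | mset q = letter_mset h ns \<and> q ! Suc i < q ! i. G q)"
proof -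
  let ?M = "letter_mset h ns"
  let ?c = "real (size ?M * (size ?M - 1)) - real (pair_weight h ns)"
  have "(\<Sum>p | mset p = ?M \<and> p ! i \<le> p ! Suc i. modify_sum h ns G p i)
      = (\<Sum>a\<in>{1..h}. \<Sum>b\<in>{1..<a}. \<Sum>p | mset p = ?M \<and> p ! i \<le> p ! Suc i.
           \<Sum>i'\<in>positions p a. \<Sum>j'\<in>positions p b. G (modify p i i' j'))"
    unfolding modify_sum_def by (subst sum.swap) (rule sum.cong[OF refl], rule sum.swap)
  also have "\<dots> = (\<Sum>a\<in>{1..h}. \<Sum>b\<in>{1..<a}. \<Sum>q | mset q = ?M \<and> q ! i = a \<and> q ! Suc i = b.
           card (le_pairs q) * G q)"
    using assms by (intro sum.cong refl sum_modify_eq_sum_le_pairs) auto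
  also have "\<dots> = (\<Sum>a\<in>{1..h}. \<Sum>b\<in>{1..<a}. \<Sum>q | mset q = ?M \<and> q ! i = a \<and> q ! Suc i = b. ?c * G q)"
  proof -
    have "real (card (le_pairs q)) = ?c" if "mset q = ?M" for q
    proof -
      have "card (le_pairs q) + pair_weight h ns = size ?M * (size ?M - 1)"
        using card_le_pairs[OF that] that by (metis size_mset)
      then have "real (card (le_pairs q)) + real (pair_weight h ns) = real (size ?M * (size ?M - 1))"
        by (metis of_nat_add)
      then show ?thesis by linarith
    qed
    then show ?thesis by (intro sum.cong refl) auto
  qed
  also have "\<dots> = ?c * (\<Sum>a\<in>{1..h}. \<Sum>b\<in>{1..<a}. \<Sum>q | mset q = ?M \<and> q ! i = a \<and> q ! Suc i = b. G q)"
    by (simp add: sum_distrib_left)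
  also have "\<dots> = ?c * (\<Sum>q | mset q = ?M \<and> q ! Suc i < q ! i. G q)"
    by (simp only: sum_descents_partition[OF assms])
  finally show ?thesis .
qed

lemma sum_descents_eq_sum_des:
  fixes G :: "nat list \<Rightarrow> real"
  assumes "finite P" "\<And>p. p \<in> P \<Longrightarrow> length p = n"
  shows "(\<Sum>i\<in>{0..<n - 1}. \<Sum>p\<in>{p\<in>P. p ! Suc i < p ! i}. G p) = (\<Sum>p\<in>P. des p * G p)"
proof -
  have "(\<Sum>i\<in>{0..<n - 1}. \<Sum>p\<in>{p\<in>P. p ! Suc i < p ! i}. G p)
      = (\<Sum>i\<in>{0..<n - 1}. \<Sum>p\<in>P. if p ! Suc i < p ! i then G p else 0)"
    using assms(1) by (simp add: sum.inter_filter)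
  also have "\<dots> = (\<Sum>p\<in>P. \<Sum>i\<in>{0..<n - 1}. if p ! Suc i < p ! i then G p else 0)"
    by (rule sum.swap)
  also have "\<dots> = (\<Sum>p\<in>P. des p * G p)"
  proof (rule sum.cong[OF refl])
    fix p assume "p \<in> P"
    then have descents: "{i\<in>{0..<n - 1}. p ! Suc i < p ! i} = {i. Suc i < length p \<and> p ! i > p ! Suc i}"
      using assms(2) by auto
    have "(\<Sum>i\<in>{0..<n - 1}. if p ! Suc i < p ! i then G p else 0) = (\<Sum>i\<in>{i\<in>{0..<n - 1}. p ! Suc i < p ! i}. G p)"
      by (rule sum.inter_filter[symmetric]) simp
    then show "(\<Sum>i\<in>{0..<n - 1}. if p ! Suc i < p ! i then G p else 0) = des p * G p"
      by (simp only: descents des_def) simp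
  qed
  finally show ?thesis .
qed

section \<open>Expectations\<close>

definition pair_mset :: "nat \<Rightarrow> (nat \<Rightarrow> nat) \<Rightarrow> (nat \<times> nat) multiset" where
  "pair_mset h ns = (\<Sum>a\<in>{1..h}. \<Sum>b\<in>{1..<a}. replicate_mset (ns a * ns b) (a, b))"

lemma J_pmf_eq_pmf_of_multiset: "J_pmf h ns = pmf_of_multiset (pair_mset h ns)"
  unfolding J_pmf_def pair_mset_def ..

lemma count_pair_mset:
  "count (pair_mset h ns) (a, b) = (if (a, b) \<in> (SIGMA a:{1..h}. {1..<a}) then ns a * ns b else 0)"
proof -
  have "count (pair_mset h ns) (a, b)
      = (\<Sum>a'\<in>{1..h}. \<Sum>b'\<in>{1..<a'}. if (a, b) = (a', b') then ns a' * ns b' else 0)"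
    by (simp add: pair_mset_def count_sum)
  also have "\<dots> = (\<Sum>a'\<in>{1..h}. if a' = a then (if b \<in> {1..<a'} then ns a' * ns b else 0) else 0)"
    by (intro sum.cong refl) (auto simp: sum.delta)
  also have "\<dots> = (if (a, b) \<in> (SIGMA a:{1..h}. {1..<a}) then ns a * ns b else 0)"
    by (simp add: sum.delta)
  finally show ?thesis .
qed

lemma size_pair_mset: "size (pair_mset h ns) = pair_weight h ns"
  by (simp add: pair_mset_def pair_weight_def)

lemma pair_weight_pos: "h \<ge> 2 \<Longrightarrow> \<forall>a\<in>{1..h}. ns a > 0 \<Longrightarrow> pair_weight h ns > 0"
  unfolding pair_weight_def
  by (rule ordered_comm_monoid_add_class.sum_pos2[of _ 2]) (auto intro!: sum_nonneg simp: numeral_2_eq_2)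

lemma set_pmf_J_pmf:
  assumes "pair_weight h ns > 0"
  shows "set_pmf (J_pmf h ns) \<subseteq> (SIGMA a:{1..h}. {1..<a})"
proof
  fix ab assume "ab \<in> set_pmf (J_pmf h ns)"
  moreover have "pair_mset h ns \<noteq> {#}"
    using assms size_pair_mset[of h ns] by auto
  ultimately have "count (pair_mset h ns) ab > 0"
    by (simp add: J_pmf_eq_pmf_of_multiset)
  then show "ab \<in> (SIGMA a:{1..h}. {1..<a})"
    by (cases ab) (auto simp: count_pair_mset split: if_splits)
qed

lemma expectation_bind_J_pmf:
  fixes G :: "'a \<Rightarrow> real"
  assumes "pair_weight h ns > 0"
    and "\<And>a b. a \<in> {1..h} \<Longrightarrow> b \<in> {1..<a} \<Longrightarrow> finite (set_pmf (f (a, b)))"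
  shows "measure_pmf.expectation (J_pmf h ns \<bind> f) G
       = (\<Sum>a\<in>{1..h}. \<Sum>b\<in>{1..<a}. real (ns a * ns b) * measure_pmf.expectation (f (a, b)) G)
         / pair_weight h ns"
proof -
  let ?J = "SIGMA a:{1..h}. {1..<a}"
  have ne: "pair_mset h ns \<noteq> {#}"
    using assms(1) size_pair_mset[of h ns] by auto
  have "measure_pmf.expectation (J_pmf h ns \<bind> f) G
      = (\<Sum>ab\<in>?J. pmf (J_pmf h ns) ab *\<^sub>R measure_pmf.expectation (f ab) G)"
    using set_pmf_J_pmf[OF assms(1)] assms(2) by (intro pmf_expectation_bind) auto
  also have "\<dots> = (\<Sum>(a, b)\<in>?J. real (ns a * ns b) * measure_pmf.expectation (f (a, b)) G / pair_weight h ns)"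
    using ne by (intro sum.cong refl) (auto simp: J_pmf_eq_pmf_of_multiset count_pair_mset size_pair_mset)
  also have "\<dots> = (\<Sum>a\<in>{1..h}. \<Sum>b\<in>{1..<a}. real (ns a * ns b) * measure_pmf.expectation (f (a, b)) G) / pair_weight h ns"
    by (simp add: sum.Sigma[symmetric] sum_divide_distrib)
  finally show ?thesis .
qed

lemma expectation_uniform_modify:
  fixes G :: "nat list \<Rightarrow> real"
  assumes "positions p a \<noteq> {}" "positions p b \<noteq> {}"
  shows "measure_pmf.expectation (pmf_of_set (positions p a) \<bind>
           (\<lambda>i'. pmf_of_set (positions p b) \<bind> (\<lambda>j'. return_pmf (modify p i i' j')))) G
       = (\<Sum>i'\<in>positions p a. \<Sum>j'\<in>positions p b. G (modify p i i' j'))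
         / (card (positions p a) * card (positions p b))"
  using assms by (simp add: pmf_expectation_bind_pmf_of_set set_bind_pmf sum_divide_distrib sum_distrib_left field_simps)

definition step_pmf :: "nat \<Rightarrow> (nat \<Rightarrow> nat) \<Rightarrow> nat list \<Rightarrow> nat \<Rightarrow> nat list pmf" where
  "step_pmf h ns p i = J_pmf h ns \<bind> (\<lambda>J.
     if p ! i > p ! Suc i then return_pmf p
     else pmf_of_set (positions p (fst J)) \<bind>
       (\<lambda>i'. pmf_of_set (positions p (snd J)) \<bind> (\<lambda>j'. return_pmf (modify p i i' j'))))"

lemma pistar_pmf_eq_bind_step_pmf:
  "pistar_pmf h ns = pi_pmf h ns \<bind> (\<lambda>p. pmf_of_set {0..<length p - 1} \<bind> step_pmf h ns p)"
  unfolding pistar_pmf_def step_pmf_def ..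

lemma positions_of_letter:
  assumes "mset p = letter_mset h ns" "a \<in> {1..h}" "ns a > 0"
  shows "card (positions p a) = ns a" "positions p a \<noteq> {}"
proof -
  show "card (positions p a) = ns a"
    using assms by (simp add: card_positions count_letter_mset)
  with assms(3) show "positions p a \<noteq> {}" by (metis card.empty less_irrefl)
qed

lemma finite_set_pmf_step_pmf:
  assumes "h \<ge> 2" "\<forall>a\<in>{1..h}. ns a > 0" "mset p = letter_mset h ns"
  shows "finite (set_pmf (step_pmf h ns p i))"
proof -
  note J = set_pmf_J_pmf[OF pair_weight_pos[OF assms(1,2)]]
  have "finite (set_pmf (J_pmf h ns))"
    by (rule finite_subset[OF J]) (simp add: finite_SigmaI)
  moreover have "fst J \<in> {1..h} \<and> snd J \<in> {1..h}" if "J \<in> set_pmf (J_pmf h ns)" for J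
    using J that by auto
  ultimately show ?thesis
    using positions_of_letter(2)[OF assms(3)] assms(2) by (auto simp: step_pmf_def set_bind_pmf)
qed

lemma expectation_step_pmf:
  fixes G :: "nat list \<Rightarrow> real"
  assumes "h \<ge> 2" "\<forall>a\<in>{1..h}. ns a > 0" "mset p = letter_mset h ns"
  shows "measure_pmf.expectation (step_pmf h ns p i) G
       = (if p ! Suc i < p ! i then G p else modify_sum h ns G p i / pair_weight h ns)"
proof (cases "p ! Suc i < p ! i")
  case True
  then show ?thesis by (simp add: step_pmf_def bind_pmf_const)
next
  case False
  note pos = positions_of_letter[OF assms(3) _ bspec[OF assms(2)]]
  have "measure_pmf.expectation (step_pmf h ns p i) G
      = (\<Sum>a\<in>{1..h}. \<Sum>b\<in>{1..<a}. real (ns a * ns b) * measure_pmf.expectation (pmf_of_set (positions p a) \<bind>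
           (\<lambda>i'. pmf_of_set (positions p b) \<bind> (\<lambda>j'. return_pmf (modify p i i' j')))) G) / pair_weight h ns"
    unfolding step_pmf_def using False pos pair_weight_pos[OF assms(1,2)]
    by (subst expectation_bind_J_pmf) (auto simp: set_bind_pmf)
  also have "\<dots> = modify_sum h ns G p i / pair_weight h ns"
    using pos assms(2) by (simp add: expectation_uniform_modify modify_sum_def)
  finally show ?thesis using False by simp
qed

lemma sum_expectation_step_pmf:
  fixes G :: "nat list \<Rightarrow> real"
  assumes "h \<ge> 2" "\<forall>a\<in>{1..h}. ns a > 0" "Suc i < size (letter_mset h ns)"
  shows "(\<Sum>p | mset p = letter_mset h ns. measure_pmf.expectation (step_pmf h ns p i) G)
       = real (size (letter_mset h ns) * (size (letter_mset h ns) - 1)) / pair_weight h ns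
         * (\<Sum>p | mset p = letter_mset h ns \<and> p ! Suc i < p ! i. G p)"
proof -
  let ?M = "letter_mset h ns"
  let ?T = "real (pair_weight h ns)"
  let ?N = "real (size ?M * (size ?M - 1))"
  let ?D = "\<Sum>p | mset p = ?M \<and> p ! Suc i < p ! i. G p"
  have "(\<Sum>p | mset p = ?M. measure_pmf.expectation (step_pmf h ns p i) G)
      = (\<Sum>p | mset p = ?M. if p ! Suc i < p ! i then G p else modify_sum h ns G p i / ?T)"
    using assms(1,2) by (intro sum.cong refl) (simp add: expectation_step_pmf)
  also have "\<dots> = ?D + (\<Sum>p | mset p = ?M \<and> p ! i \<le> p ! Suc i. modify_sum h ns G p i) / ?T"
    by (simp add: sum.If_cases Int_def Compl_eq not_less sum_divide_distrib)
  also have "\<dots> = ?D + (?N - ?T) * ?D / ?T"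
    by (simp only: sum_modify_sum[OF assms(3)])
  also have "\<dots> = ?N / ?T * ?D"
    using pair_weight_pos[OF assms(1,2)] by (simp add: field_simps)
  finally show ?thesis .
qed

lemma expectation_pistar_pmf:
  fixes G :: "nat list \<Rightarrow> real"
  assumes "h \<ge> 2" "\<forall>a\<in>{1..h}. ns a > 0"
  shows "measure_pmf.expectation (pistar_pmf h ns) G
       = size (letter_mset h ns) / (pair_weight h ns * card (mperms h ns)) * (\<Sum>p\<in>mperms h ns. des p * G p)"
proof -
  let ?M = "letter_mset h ns"
  let ?n = "size ?M"
  let ?P = "mperms h ns"
  have P: "?P = {p. mset p = ?M}"
    by (simp add: mperms_eq_permutations_of_multiset permutations_of_multiset_def)
  have len: "length p = ?n" if "p \<in> ?P" for p
    using that P by (metis mem_Collect_eq size_mset)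
  have fin: "finite ?P" "?P \<noteq> {}"
    by (simp_all add: mperms_eq_permutations_of_multiset)
  have "?n = (\<Sum>a\<in>{1..h}. ns a)" by (rule size_letter_mset)
  also have "\<dots> \<ge> (\<Sum>a\<in>{1..h}. 1)"
    using assms(2) by (intro sum_mono) (simp add: Suc_leI)
  finally have n2: "?n \<ge> 2" using assms(1) by simp
  have fin_step: "finite (set_pmf (step_pmf h ns p i))" if "p \<in> ?P" for p i
    using finite_set_pmf_step_pmf[OF assms] that P by simp
  have "measure_pmf.expectation (pistar_pmf h ns) G
      = (\<Sum>p\<in>?P. measure_pmf.expectation (pmf_of_set {0..<length p - 1} \<bind> step_pmf h ns p) G) / card ?P"
    unfolding pistar_pmf_eq_bind_step_pmf pi_pmf_def using fin fin_step len n2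
    by (subst pmf_expectation_bind_pmf_of_set) (auto simp: set_bind_pmf sum_divide_distrib sum_distrib_left divide_inverse mult.commute)
  also have "\<dots> = (\<Sum>p\<in>?P. (\<Sum>i\<in>{0..<?n - 1}. measure_pmf.expectation (step_pmf h ns p i) G) / (?n - 1)) / card ?P"
    using fin_step len n2
    by (intro arg_cong2[where f = "(/)"] sum.cong refl)
       (simp add: pmf_expectation_bind_pmf_of_set divide_inverse sum_distrib_left mult.commute)
  also have "\<dots> = (\<Sum>i\<in>{0..<?n - 1}. \<Sum>p\<in>?P. measure_pmf.expectation (step_pmf h ns p i) G) / ((?n - 1) * card ?P)"
    by (simp add: sum_divide_distrib[symmetric] sum.swap[of _ ?P])
  also have "\<dots> = (\<Sum>i\<in>{0..<?n - 1}. real (?n * (?n - 1)) / pair_weight h ns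
                     * (\<Sum>p | mset p = ?M \<and> p ! Suc i < p ! i. G p)) / ((?n - 1) * card ?P)"
    unfolding P using assms by (intro arg_cong2[where f = "(/)"] sum.cong refl sum_expectation_step_pmf) auto
  also have "\<dots> = real (?n * (?n - 1)) / pair_weight h ns
                     * (\<Sum>i\<in>{0..<?n - 1}. \<Sum>p | mset p = ?M \<and> p ! Suc i < p ! i. G p) / ((?n - 1) * card ?P)"
    by (simp only: sum_distrib_left)
  also have "\<dots> = ?n / (pair_weight h ns * card ?P) * (\<Sum>i\<in>{0..<?n - 1}. \<Sum>p | mset p = ?M \<and> p ! Suc i < p ! i. G p)"
  proof -
    have cancel: "x * y / t * S / (y * c) = x / (t * c) * S" if "y > 0" "t > 0" "c > 0" for x y t c S :: real
      using that by (simp add: field_simps)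
    have "real (?n - 1) > 0" "real (pair_weight h ns) > 0" "real (card ?P) > 0"
      using n2 pair_weight_pos[OF assms] fin by (auto simp: card_gt_0_iff)
    then show ?thesis
      by (simp only: of_nat_mult cancel)
  qed
  also have "\<dots> = ?n / (pair_weight h ns * card ?P) * (\<Sum>p\<in>?P. des p * G p)"
    using sum_descents_eq_sum_des[of ?P ?n G] fin len by (simp add: P)
  finally show ?thesis .
qed

lemma size_biased_map_pmf_of_set:
  fixes W :: "'a \<Rightarrow> real" and Q :: "'a pmf"
  assumes "finite P" "P \<noteq> {}" "\<And>p. W p \<ge> 0"
    and "\<And>G :: 'a \<Rightarrow> real. measure_pmf.expectation Q G = c * (\<Sum>p\<in>P. W p * G p)"
  shows "size_biased (map_pmf W (pmf_of_set P)) (map_pmf W Q)"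
proof -
  let ?X = "map_pmf W (pmf_of_set P)"
  have EX: "measure_pmf.expectation ?X g = (\<Sum>p\<in>P. g (W p)) / card P" for g :: "real \<Rightarrow> real"
    using assms(1,2) by (simp add: integral_pmf_of_set)
  have EY: "measure_pmf.expectation (map_pmf W Q) f = c * (\<Sum>p\<in>P. W p * f (W p))" for f :: "real \<Rightarrow> real"
    using assms(4)[of "\<lambda>p. f (W p)"] by simp
  have normalized: "c * (\<Sum>p\<in>P. W p) = 1"
    using EY[of "\<lambda>_. 1"] by simp
  then have "(\<Sum>p\<in>P. W p) > 0"
    using sum_nonneg[of P W] assms(3) by (metis less_eq_real_def mult_zero_right zero_neq_one)
  moreover have "real (card P) > 0"
    using assms(1,2) by (simp add: card_gt_0_iff)
  ultimately have "measure_pmf.expectation ?X (\<lambda>x. x) > 0"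
    unfolding EX by simp
  moreover have "AE x in measure_pmf ?X. 0 \<le> x"
    using assms(1,2,3) by (auto simp: AE_measure_pmf_iff)
  moreover have "integrable (measure_pmf ?X) (\<lambda>x. x)"
    using assms(1,2) by (intro integrable_measure_pmf_finite) simp
  moreover have "measure_pmf.expectation ?X (\<lambda>x. x * f x)
      = measure_pmf.expectation ?X (\<lambda>x. x) * measure_pmf.expectation (map_pmf W Q) f" for f
    unfolding EX EY using normalized by (simp add: field_simps)
  ultimately show ?thesis
    unfolding size_biased_def by blast
qed

theorem lemma2p14:
  fixes h :: nat and ns :: "nat \<Rightarrow> nat"
  assumes "h \<ge> 2"
    and "\<forall>a\<in>{1..h}. ns a > 0"
    and "(\<Sum>a\<in>{1..h}. ns a) \<ge> 4"
  shows "size_biased (map_pmf (\<lambda>p. real (des p)) (pi_pmf h ns))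
                     (map_pmf (\<lambda>p. real (des p)) (pistar_pmf h ns))"
proof -
  have "finite (mperms h ns)" "mperms h ns \<noteq> {}"
    by (simp_all add: mperms_eq_permutations_of_multiset)
  then show ?thesis
    unfolding pi_pmf_def
    by (rule size_biased_map_pmf_of_set) (simp_all only: of_nat_0_le_iff expectation_pistar_pmf[OF assms(1,2)])
qed

end
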